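(* Let $\gamma > 1$ and let $I$ be a $\gamma$-stable instance of the metric Steiner tree problem with optimal Steiner tree $\mathrm{OPT}$. Let $H$ be a subgraph of $\mathrm{OPT}$ with at least one edge, let $ab$ be an edge of $H$, and let $c \in V(\mathrm{OPT}) \setminus V(H)$ satisfy $w_{bc} < \gamma(\gamma - 1) w_{ab}$. Then $w_{bc} < \frac{w_{ab}}{\gamma - 1}$ and $w_{ab} < \frac{w_{bc}}{\gamma - 1}$.
   Context: An instance of the metric Steiner tree problem consists of a finite set $V$ of points of a metric space with metric $d$, a set $T \subseteq V$ of terminals, and the complete graph on $V$ with edge weights $w_{uv} = d(u,v)$. Points of $V \setminus T$ are Steiner points. A Steiner tree is a tree in this complete graph whose vertex set contains all of $T$; its weight is the sum of its edge weights. For $\gamma > 1$, the instance is $\gamma$-stable if it has a minimum-weight Steiner tree $\mathrm{OPT}$ such that for every $w' : V \times V \to \mathbb{R}_{\ge 0}$ with $w_{uv} \le w'_{uv} \le \gamma w_{uv}$ for all $u,v$, every minimum-weight Steiner tree with respect to $w'$ equals $\mathrm{OPT}$. $V(\mathrm{OPT})$ and $V(H)$ denote vertex sets. *)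

theory Defs
  imports Complex_Main
begin

definition metric_on :: "'a set \<Rightarrow> ('a \<Rightarrow> 'a \<Rightarrow> real) \<Rightarrow> bool" where
  "metric_on V d \<longleftrightarrow>
     (\<forall>u\<in>V. \<forall>v\<in>V. d u v \<ge> 0 \<and> (d u v = 0 \<longleftrightarrow> u = v) \<and> d u v = d v u) \<and>
     (\<forall>u\<in>V. \<forall>v\<in>V. \<forall>x\<in>V. d u x \<le> d u v + d v x)"

definition edges_of :: "'a set \<Rightarrow> 'a set set" where
  "edges_of S = {{u, v} | u v. u \<in> S \<and> v \<in> S \<and> u \<noteq> v}"

text \<open>The original edge weights w_uv = d(u,v), as a function on (unordered) edges.\<close>
definition w :: "('a \<Rightarrow> 'a \<Rightarrow> real) \<Rightarrow> 'a set \<Rightarrow> real" where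
  "w d e = (SOME x. \<exists>u v. e = {u, v} \<and> x = d u v)"

definition adj :: "'a set set \<Rightarrow> ('a \<times> 'a) set" where
  "adj E = {(x, y). {x, y} \<in> E \<and> x \<noteq> y}"

definition connected_graph :: "'a set \<Rightarrow> 'a set set \<Rightarrow> bool" where
  "connected_graph S E \<longleftrightarrow> (\<forall>u\<in>S. \<forall>v\<in>S. (u, v) \<in> (adj E)\<^sup>*)"

text \<open>Acyclic: no edge lies on a cycle, i.e. removing any edge disconnects its endpoints.\<close>
definition acyclic_graph :: "'a set set \<Rightarrow> bool" where
  "acyclic_graph E \<longleftrightarrow> (\<forall>u v. {u, v} \<in> E \<longrightarrow> (u, v) \<notin> (adj (E - {{u, v}}))\<^sup>*)"

definition is_tree :: "'a set \<Rightarrow> 'a set \<times> 'a set set \<Rightarrow> bool" where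
  "is_tree V t \<longleftrightarrow> (case t of (S, E) \<Rightarrow>
      S \<subseteq> V \<and> S \<noteq> {} \<and> E \<subseteq> edges_of S \<and> connected_graph S E \<and> acyclic_graph E)"

definition steiner_tree :: "'a set \<Rightarrow> 'a set \<Rightarrow> 'a set \<times> 'a set set \<Rightarrow> bool" where
  "steiner_tree V T t \<longleftrightarrow> is_tree V t \<and> T \<subseteq> fst t"

definition tree_weight :: "('a set \<Rightarrow> real) \<Rightarrow> 'a set \<times> 'a set set \<Rightarrow> real" where
  "tree_weight c t = (\<Sum>e\<in>snd t. c e)"

definition min_steiner :: "'a set \<Rightarrow> 'a set \<Rightarrow> ('a set \<Rightarrow> real) \<Rightarrow> 'a set \<times> 'a set set \<Rightarrow> bool" where
  "min_steiner V T c t \<longleftrightarrow> steiner_tree V T t \<and>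
     (\<forall>t'. steiner_tree V T t' \<longrightarrow> tree_weight c t \<le> tree_weight c t')"

definition steiner_instance :: "'a set \<Rightarrow> 'a set \<Rightarrow> ('a \<Rightarrow> 'a \<Rightarrow> real) \<Rightarrow> bool" where
  "steiner_instance V T d \<longleftrightarrow> finite V \<and> T \<subseteq> V \<and> metric_on V d"

definition perturbation :: "real \<Rightarrow> 'a set \<Rightarrow> ('a \<Rightarrow> 'a \<Rightarrow> real) \<Rightarrow> ('a set \<Rightarrow> real) \<Rightarrow> bool" where
  "perturbation \<gamma> V d w' \<longleftrightarrow> (\<forall>e\<in>edges_of V. w d e \<le> w' e \<and> w' e \<le> \<gamma> * w d e)"

definition gamma_stable :: "real \<Rightarrow> 'a set \<Rightarrow> 'a set \<Rightarrow> ('a \<Rightarrow> 'a \<Rightarrow> real) \<Rightarrow> bool" where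
  "gamma_stable \<gamma> V T d \<longleftrightarrow> (\<exists>OPT. min_steiner V T (w d) OPT \<and>
     (\<forall>w'. perturbation \<gamma> V d w' \<longrightarrow> (\<forall>t. min_steiner V T w' t \<longrightarrow> t = OPT)))"

end

theory Submission
  imports Defs
begin

(* Stability implies that OPT stays the unique optimum when the weights of its own edges are
   multiplied by gamma.  So exchanging an edge uv of OPT for a non-edge pq that reconnects the two
   components of OPT - uv strictly increases this perturbed weight: gamma d(u,v) < d(p,q).  For two
   adjacent edges xy, yz of OPT and the chord xz this gives, with the triangle inequality,
   (gamma - 1) d(x,y) < d(y,z); in particular gamma < 2 as soon as OPT contains a path with two
   edges.  The conclusion is this ratio bound for ab and bc, so it remains to show that bc is an
   edge of OPT.  Otherwise follow the path of OPT from c to the edge ab: if it reaches b through an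
   edge bx, the ratio bound for ab, bx and an exchange of bx for bc give
   d(b,c) > gamma (gamma - 1) d(a,b); if it reaches a, an exchange of ab for bc together with
   gamma < 2 gives the same, contradicting the hypothesis. *)

lemma edges_ofD:
  assumes "{x, y} \<in> edges_of S"
  shows "x \<in> S" "y \<in> S" "x \<noteq> y"
  using assms unfolding edges_of_def by (auto simp: doubleton_eq_iff)

lemma w_doubleton:
  assumes "metric_on V d" "x \<in> V" "y \<in> V"
  shows "w d {x, y} = d x y"
  unfolding w_def
proof (rule some_equality)
  fix z assume "\<exists>u v. {x, y} = {u, v} \<and> z = d u v"
  then show "z = d x y"
    using assms unfolding metric_on_def by (auto simp: doubleton_eq_iff)
qed blast

lemma sym_adj: "sym (adj F)"
  by (auto simp: sym_def adj_def insert_commute)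

lemma reach_sym: "(x, y) \<in> (adj F)\<^sup>* \<Longrightarrow> (y, x) \<in> (adj F)\<^sup>*"
  using sym_adj sym_rtrancl by (metis symD)

lemma reach_edge: "{x, y} \<in> F \<Longrightarrow> (x, y) \<in> (adj F)\<^sup>*"
  by (cases "x = y") (auto simp: adj_def)

lemma reach_mono: "F \<subseteq> G \<Longrightarrow> (adj F)\<^sup>* \<subseteq> (adj G)\<^sup>*"
  by (rule rtrancl_mono) (auto simp: adj_def)

lemma reach_insert_edge:
  assumes "(x, y) \<in> (adj (insert {p, q} F))\<^sup>*"
  shows "(x, y) \<in> (adj F)\<^sup>* \<or> (x, p) \<in> (adj F)\<^sup>* \<and> (q, y) \<in> (adj F)\<^sup>*
           \<or> (x, q) \<in> (adj F)\<^sup>* \<and> (p, y) \<in> (adj F)\<^sup>*"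
  using assms
proof (induction rule: rtrancl_induct)
  case (step y z)
  then have "(y, z) \<in> adj F \<or> (y, z) = (p, q) \<or> (y, z) = (q, p)"
    by (auto simp: adj_def doubleton_eq_iff)
  then show ?case
  proof (elim disjE)
    assume "(y, z) \<in> adj F"
    then show ?case using step.IH by (meson rtrancl.rtrancl_into_rtrancl)
  qed (use step.IH in auto)
qed simp

lemma reach_last_edge:
  assumes "(c, b) \<in> (adj F)\<^sup>*" "c \<noteq> b"
  shows "\<exists>x. {b, x} \<in> F \<and> (x, c) \<in> (adj {e \<in> F. b \<notin> e})\<^sup>*"
  using assms
proof (induction rule: converse_rtrancl_induct)
  case (step c c')
  then have cc': "{c, c'} \<in> F" "c \<noteq> c'" by (auto simp: adj_def)
  show ?case
  proof (cases "c' = b")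
    case True
    with cc' have "{b, c} \<in> F" by (simp add: insert_commute)
    then show ?thesis by blast
  next
    case False
    then obtain x where x: "{b, x} \<in> F" "(x, c') \<in> (adj {e \<in> F. b \<notin> e})\<^sup>*"
      using step.IH by blast
    have "(c', c) \<in> (adj {e \<in> F. b \<notin> e})\<^sup>*"
    proof (rule reach_edge)
      show "{c', c} \<in> {e \<in> F. b \<notin> e}" using cc' False step.prems by (simp add: insert_commute)
    qed
    with x show ?thesis by (meson rtrancl_trans)
  qed
qed simp

lemma connected_graph_exchange:
  assumes "connected_graph S E" "p \<noteq> q"
    and "(u, p) \<in> (adj (E - {{u, v}}))\<^sup>*" "(v, q) \<in> (adj (E - {{u, v}}))\<^sup>*"
  shows "connected_graph S (insert {p, q} (E - {{u, v}}))"
proof -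
  define E' where "E' = insert {p, q} (E - {{u, v}})"
  have "(adj (E - {{u, v}}))\<^sup>* \<subseteq> (adj E')\<^sup>*" by (rule reach_mono) (auto simp: E'_def)
  then have "(u, p) \<in> (adj E')\<^sup>*" "(q, v) \<in> (adj E')\<^sup>*"
    using assms(3) reach_sym[OF assms(4)] by auto
  moreover have "(p, q) \<in> (adj E')\<^sup>*" by (simp add: E'_def reach_edge)
  ultimately have uv: "(u, v) \<in> (adj E')\<^sup>*" by (meson rtrancl_trans)
  have "adj E \<subseteq> (adj E')\<^sup>*"
  proof
    fix e assume "e \<in> adj E"
    then obtain x y where e: "e = (x, y)" "{x, y} \<in> E" by (auto simp: adj_def)
    show "e \<in> (adj E')\<^sup>*"
    proof (cases "{x, y} = {u, v}")
      case True
      then show ?thesis using e uv reach_sym by (auto simp: doubleton_eq_iff)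
    next
      case False
      then show ?thesis using e by (simp add: E'_def reach_edge)
    qed
  qed
  then show ?thesis
    using assms(1) unfolding connected_graph_def E'_def by (meson rtrancl_subset_rtrancl subsetD)
qed

lemma acyclic_graph_exchange:
  assumes "acyclic_graph E" "{u, v} \<in> E" "{p, q} \<notin> E"
    and "(u, p) \<in> (adj (E - {{u, v}}))\<^sup>*" "(v, q) \<in> (adj (E - {{u, v}}))\<^sup>*"
  shows "acyclic_graph (insert {p, q} (E - {{u, v}}))"
  unfolding acyclic_graph_def
proof (intro allI impI notI)
  define G where "G = E - {{u, v}}"
  have pq_apart: "(p, q) \<notin> (adj G)\<^sup>*"
  proof
    assume "(p, q) \<in> (adj G)\<^sup>*"
    then have "(u, v) \<in> (adj G)\<^sup>*"
      using assms(4,5) reach_sym unfolding G_def by (meson rtrancl_trans)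
    then show False using assms(1,2) unfolding acyclic_graph_def G_def by blast
  qed
  fix x y
  assume xy: "{x, y} \<in> insert {p, q} G"
    and cycle: "(x, y) \<in> (adj (insert {p, q} G - {{x, y}}))\<^sup>*"
  show False
  proof (cases "{x, y} = {p, q}")
    case True
    then have "insert {p, q} G - {{x, y}} = G" using assms(3) by (auto simp: G_def)
    with cycle have "(x, y) \<in> (adj G)\<^sup>*" by simp
    with True show False using pq_apart reach_sym by (metis doubleton_eq_iff)
  next
    case False
    define F where "F = G - {{x, y}}"
    have xyG: "{x, y} \<in> G" using xy False by simp
    have F_sub: "(adj F)\<^sup>* \<subseteq> (adj G)\<^sup>*" by (rule reach_mono) (auto simp: F_def)
    have "(x, y) \<in> (adj (insert {p, q} F))\<^sup>*"
      using cycle False unfolding F_def by (simp add: insert_Diff_if)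
    moreover have "(x, y) \<notin> (adj F)\<^sup>*"
    proof -
      have "(x, y) \<notin> (adj (E - {{x, y}}))\<^sup>*"
        using assms(1) xyG unfolding acyclic_graph_def G_def by blast
      moreover have "(adj F)\<^sup>* \<subseteq> (adj (E - {{x, y}}))\<^sup>*"
        by (rule reach_mono) (auto simp: F_def G_def)
      ultimately show ?thesis by blast
    qed
    ultimately consider "(x, p) \<in> (adj F)\<^sup>*" "(q, y) \<in> (adj F)\<^sup>*"
      | "(x, q) \<in> (adj F)\<^sup>*" "(p, y) \<in> (adj F)\<^sup>*"
      using reach_insert_edge[of x y p q F] by blast
    then have "(p, q) \<in> (adj G)\<^sup>*"
    proof cases
      case 1
      have "(p, x) \<in> (adj G)\<^sup>*" "(y, q) \<in> (adj G)\<^sup>*"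
        using F_sub reach_sym[OF 1(1)] reach_sym[OF 1(2)] by blast+
      then show ?thesis using reach_edge[OF xyG] by (meson rtrancl_trans)
    next
      case 2
      have "(p, y) \<in> (adj G)\<^sup>*" "(x, q) \<in> (adj G)\<^sup>*" using F_sub 2 by blast+
      then show ?thesis using reach_sym[OF reach_edge[OF xyG]] by (meson rtrancl_trans)
    qed
    then show False using pq_apart by blast
  qed
qed

lemma is_tree_exchange:
  assumes "is_tree V (S, E)" "{u, v} \<in> E" "p \<in> S" "q \<in> S" "p \<noteq> q" "{p, q} \<notin> E"
    and "(u, p) \<in> (adj (E - {{u, v}}))\<^sup>*" "(v, q) \<in> (adj (E - {{u, v}}))\<^sup>*"
  shows "is_tree V (S, insert {p, q} (E - {{u, v}}))"
proof -
  have tree: "S \<subseteq> V" "S \<noteq> {}" "E \<subseteq> edges_of S" "connected_graph S E" "acyclic_graph E"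
    using assms(1) unfolding is_tree_def by auto
  have "{p, q} \<in> edges_of S" using assms(3-5) unfolding edges_of_def by blast
  then have "insert {p, q} (E - {{u, v}}) \<subseteq> edges_of S" using tree(3) by blast
  moreover have "connected_graph S (insert {p, q} (E - {{u, v}}))"
    using connected_graph_exchange[OF tree(4) assms(5,7,8)] .
  moreover have "acyclic_graph (insert {p, q} (E - {{u, v}}))"
    using acyclic_graph_exchange[OF tree(5) assms(2,6-8)] .
  ultimately show ?thesis using tree(1,2) unfolding is_tree_def by simp
qed

lemma finite_steiner_trees:
  assumes "finite V"
  shows "finite {t. steiner_tree V T t}"
proof (rule finite_subset)
  show "{t. steiner_tree V T t} \<subseteq> Pow V \<times> Pow (Pow V)"
  proof
    fix t assume "t \<in> {t. steiner_tree V T t}"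
    then have "fst t \<subseteq> V" "snd t \<subseteq> edges_of (fst t)"
      unfolding steiner_tree_def is_tree_def by (simp_all split: prod.splits)
    moreover have "edges_of (fst t) \<subseteq> Pow (fst t)" unfolding edges_of_def by blast
    ultimately show "t \<in> Pow V \<times> Pow (Pow V)" by (auto simp: mem_Times_iff)
  qed
  show "finite (Pow V \<times> Pow (Pow V))" using assms by simp
qed

lemma min_steiner_exists:
  assumes "finite V" "steiner_tree V T t"
  shows "\<exists>t. min_steiner V T c t"
proof -
  obtain t' where "is_arg_min (tree_weight c) (\<lambda>t. t \<in> {t. steiner_tree V T t}) t'"
    using ex_is_arg_min_if_finite[OF finite_steiner_trees[OF assms(1)]] assms(2) by blast
  then have "min_steiner V T c t'" unfolding is_arg_min_def min_steiner_def by (auto simp: not_less)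
  then show ?thesis ..
qed

locale stable_steiner =
  fixes \<gamma> :: real and V T :: "'a set" and d :: "'a \<Rightarrow> 'a \<Rightarrow> real"
    and S :: "'a set" and E :: "'a set set"
  assumes gamma_ge_1: "\<gamma> \<ge> 1"
    and steiner_inst: "steiner_instance V T d"
    and stable: "gamma_stable \<gamma> V T d"
    and opt: "min_steiner V T (w d) (S, E)"
begin

lemma finite_V: "finite V" and metric: "metric_on V d"
  using steiner_inst unfolding steiner_instance_def by auto

lemma opt_tree: "is_tree V (S, E)" and opt_steiner: "steiner_tree V T (S, E)"
  using opt unfolding min_steiner_def steiner_tree_def by auto

lemma S_subset_V: "S \<subseteq> V"
  using opt_tree unfolding is_tree_def by simp

lemma opt_edgeD:
  assumes "{x, y} \<in> E"
  shows "x \<in> S" "y \<in> S" "x \<noteq> y"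
proof -
  have "{x, y} \<in> edges_of S" using assms opt_tree unfolding is_tree_def by auto
  from edges_ofD[OF this] show "x \<in> S" "y \<in> S" "x \<noteq> y" .
qed

lemma d_sym: "x \<in> V \<Longrightarrow> y \<in> V \<Longrightarrow> d x y = d y x"
  using metric unfolding metric_on_def by blast

lemma d_triangle: "x \<in> V \<Longrightarrow> y \<in> V \<Longrightarrow> z \<in> V \<Longrightarrow> d x z \<le> d x y + d y z"
  using metric unfolding metric_on_def by blast

lemma d_pos:
  assumes "x \<in> V" "y \<in> V" "x \<noteq> y"
  shows "d x y > 0"
proof -
  have "d x y \<ge> 0" "d x y \<noteq> 0" using metric assms unfolding metric_on_def by blast+
  then show ?thesis by linarith
qed

lemma w_le_gamma_w:
  assumes "e \<in> edges_of V"
  shows "w d e \<le> \<gamma> * w d e"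
proof -
  obtain x y where "e = {x, y}" "x \<in> V" "y \<in> V" using assms unfolding edges_of_def by blast
  then have "w d e \<ge> 0" using metric w_doubleton[OF metric] unfolding metric_on_def by simp
  then show ?thesis using gamma_ge_1 by (simp add: mult_le_cancel_right1)
qed

lemma opt_unique:
  assumes "perturbation \<gamma> V d w'" "min_steiner V T w' t"
  shows "t = (S, E)"
proof -
  obtain OPT where unique: "\<And>w' t. perturbation \<gamma> V d w' \<Longrightarrow> min_steiner V T w' t \<Longrightarrow> t = OPT"
    using stable unfolding gamma_stable_def by blast
  have "perturbation \<gamma> V d (w d)" unfolding perturbation_def using w_le_gamma_w by simp
  then show ?thesis using unique[OF _ opt] unique[OF assms] by simp
qed

lemma opt_strictly_cheapest:
  assumes "perturbation \<gamma> V d w'" "steiner_tree V T t" "t \<noteq> (S, E)"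
  shows "tree_weight w' (S, E) < tree_weight w' t"
proof -
  obtain t' where t': "min_steiner V T w' t'" using min_steiner_exists[OF finite_V assms(2)] by blast
  then have "(S, E) = t'" using opt_unique[OF assms(1)] by simp
  then have "tree_weight w' (S, E) \<le> tree_weight w' t" using t' assms(2) unfolding min_steiner_def by blast
  moreover have "tree_weight w' t \<noteq> tree_weight w' (S, E)"
  proof
    assume "tree_weight w' t = tree_weight w' (S, E)"
    then have "min_steiner V T w' t" using t' \<open>(S, E) = t'\<close> assms(2) unfolding min_steiner_def by simp
    then show False using opt_unique[OF assms(1)] assms(3) by blast
  qed
  ultimately show ?thesis by simp
qed

definition opt_scaled_weight :: "'a set \<Rightarrow> real" where
  "opt_scaled_weight e = (if e \<in> E then \<gamma> * w d e else w d e)"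

lemma perturbation_opt_scaled_weight: "perturbation \<gamma> V d opt_scaled_weight"
  unfolding perturbation_def opt_scaled_weight_def using w_le_gamma_w by simp

lemma finite_opt_edges: "finite E"
proof (rule finite_subset)
  show "E \<subseteq> Pow V"
    using opt_tree S_subset_V unfolding is_tree_def edges_of_def by blast
  show "finite (Pow V)" using finite_V by simp
qed

lemma exchange_bound:
  assumes "{u, v} \<in> E" "p \<in> S" "q \<in> S" "p \<noteq> q" "{p, q} \<notin> E"
    and "(u, p) \<in> (adj (E - {{u, v}}))\<^sup>*" "(v, q) \<in> (adj (E - {{u, v}}))\<^sup>*"
  shows "\<gamma> * d u v < d p q"
proof -
  define E' where "E' = insert {p, q} (E - {{u, v}})"
  have "steiner_tree V T (S, E')"
    using is_tree_exchange[OF opt_tree assms] opt_steiner unfolding steiner_tree_def E'_def by simp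
  moreover have "(S, E') \<noteq> (S, E)" using assms(5) unfolding E'_def by auto
  ultimately have less: "tree_weight opt_scaled_weight (S, E) < tree_weight opt_scaled_weight (S, E')"
    by (rule opt_strictly_cheapest[OF perturbation_opt_scaled_weight])
  have "tree_weight opt_scaled_weight (S, E)
      = opt_scaled_weight {u, v} + sum opt_scaled_weight (E - {{u, v}})"
    unfolding tree_weight_def using finite_opt_edges assms(1) by (simp add: sum.remove)
  moreover have "tree_weight opt_scaled_weight (S, E')
      = opt_scaled_weight {p, q} + sum opt_scaled_weight (E - {{u, v}})"
    unfolding tree_weight_def E'_def using finite_opt_edges assms(5) by simp
  moreover have "u \<in> V" "v \<in> V" "p \<in> V" "q \<in> V"
    using opt_edgeD[OF assms(1)] assms(2,3) S_subset_V by auto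
  ultimately show ?thesis
    using less assms(1,5) w_doubleton[OF metric] by (simp add: opt_scaled_weight_def)
qed

lemma adjacent_edges_exchange:
  assumes "{x, y} \<in> E" "{y, z} \<in> E" "x \<noteq> z"
  shows "\<gamma> * d x y < d x z"
proof -
  have "x \<in> S" "z \<in> S" "x \<noteq> y" "y \<noteq> z" using opt_edgeD assms(1,2) by blast+
  then have yz: "{y, z} \<in> E - {{x, y}}" using assms(2,3) by (auto simp: doubleton_eq_iff)
  have "{x, z} \<notin> E"
  proof
    assume xz: "{x, z} \<in> E"
    have "{x, y} \<in> E - {{x, z}}" "{y, z} \<in> E - {{x, z}}"
      using assms \<open>x \<noteq> y\<close> \<open>y \<noteq> z\<close> by (auto simp: doubleton_eq_iff)
    then have "(x, z) \<in> (adj (E - {{x, z}}))\<^sup>*" by (meson reach_edge rtrancl_trans)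
    then show False using xz opt_tree unfolding is_tree_def acyclic_graph_def by auto
  qed
  then show ?thesis
    using exchange_bound[OF assms(1) \<open>x \<in> S\<close> \<open>z \<in> S\<close> assms(3)] reach_edge[OF yz] by blast
qed

lemma adjacent_edges_ratio:
  assumes "{x, y} \<in> E" "{y, z} \<in> E" "x \<noteq> z"
  shows "(\<gamma> - 1) * d x y < d y z"
proof -
  have "x \<in> V" "y \<in> V" "z \<in> V" using opt_edgeD assms(1,2) S_subset_V by blast+
  then have "d x z \<le> d x y + d y z" by (rule d_triangle)
  then show ?thesis using adjacent_edges_exchange[OF assms] by (simp add: algebra_simps)
qed

lemma gamma_less_2_if_adjacent_edges:
  assumes "{x, y} \<in> E" "{y, z} \<in> E" "x \<noteq> z"
  shows "\<gamma> < 2"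
proof -
  have V: "x \<in> V" "y \<in> V" "z \<in> V" and "x \<noteq> y" "y \<noteq> z"
    using opt_edgeD assms(1,2) S_subset_V by blast+
  have "(\<gamma> - 1) * d x y < d y z" using adjacent_edges_ratio[OF assms] .
  moreover have "(\<gamma> - 1) * d y z < d x y"
    using adjacent_edges_ratio[of z y x] assms V d_sym by (simp add: insert_commute)
  ultimately have "(\<gamma> - 1) * (d x y + d y z) < 1 * (d x y + d y z)" by (simp add: algebra_simps)
  moreover have "d x y + d y z > 0"
    using d_pos[OF V(1,2) \<open>x \<noteq> y\<close>] d_pos[OF V(2,3) \<open>y \<noteq> z\<close>] by simp
  ultimately show ?thesis by (simp add: mult_less_cancel_right)
qed

lemma nonadjacent_bound_a_side:
  assumes "{a, b} \<in> E" "c \<noteq> a" "c \<noteq> b" "c \<in> S" "{b, c} \<notin> E"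
    and "(a, c) \<in> (adj (E - {{a, b}}))\<^sup>*"
  shows "\<gamma> * (\<gamma> - 1) * d a b < d b c"
proof -
  obtain y where "{a, y} \<in> E - {{a, b}}"
    using reach_last_edge[OF reach_sym[OF assms(6)]] assms(2) by blast
  then have "\<gamma> < 2"
    using gamma_less_2_if_adjacent_edges[of y a b] assms(1) by (auto simp: insert_commute)
  have "a \<in> V" "b \<in> V" "c \<in> V" "a \<noteq> b" using opt_edgeD[OF assms(1)] assms(4) S_subset_V by auto
  then have "d a b > 0" by (simp add: d_pos)
  with \<open>\<gamma> < 2\<close> gamma_ge_1 have "\<gamma> * (\<gamma> - 1) * d a b < \<gamma> * d a b" by simp
  also have "\<dots> < d c b"
    using exchange_bound[OF assms(1,4) _ assms(3)] opt_edgeD[OF assms(1)] assms(5,6)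
    by (simp add: insert_commute)
  finally show ?thesis using d_sym \<open>b \<in> V\<close> \<open>c \<in> V\<close> by simp
qed

lemma nonadjacent_bound_b_side:
  assumes "{a, b} \<in> E" "c \<noteq> b" "c \<in> S" "{b, c} \<notin> E"
    and "(b, c) \<in> (adj (E - {{a, b}}))\<^sup>*"
  shows "\<gamma> * (\<gamma> - 1) * d a b < d b c"
proof -
  obtain x where x: "{b, x} \<in> E - {{a, b}}" "(x, c) \<in> (adj {e \<in> E - {{a, b}}. b \<notin> e})\<^sup>*"
    using reach_last_edge[OF reach_sym[OF assms(5)]] assms(2) by blast
  then have "a \<noteq> x" by (auto simp: insert_commute)
  have "(adj {e \<in> E - {{a, b}}. b \<notin> e})\<^sup>* \<subseteq> (adj (E - {{x, b}}))\<^sup>*"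
    by (rule reach_mono) blast
  with x have "(x, c) \<in> (adj (E - {{x, b}}))\<^sup>*" by blast
  then have "\<gamma> * d x b < d c b"
    using exchange_bound[of x b c b] x(1) assms(2-4) opt_edgeD[OF assms(1)]
    by (simp add: insert_commute)
  moreover have "b \<in> V" "c \<in> V" "x \<in> V"
    using opt_edgeD x(1) assms(3) S_subset_V by blast+
  moreover have "(\<gamma> - 1) * d a b < d b x"
    using adjacent_edges_ratio[OF assms(1) _ \<open>a \<noteq> x\<close>] x(1) by blast
  then have "\<gamma> * ((\<gamma> - 1) * d a b) \<le> \<gamma> * d b x"
    using gamma_ge_1 by (simp add: mult_left_mono)
  ultimately show ?thesis using d_sym by (simp add: mult.assoc)
qed

lemma nonadjacent_bound:
  assumes "{a, b} \<in> E" "c \<in> S" "c \<noteq> a" "c \<noteq> b" "{b, c} \<notin> E"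
  shows "\<gamma> * (\<gamma> - 1) * d a b < d b c"
proof -
  have "a \<in> S" using opt_edgeD[OF assms(1)] by simp
  then have "(a, c) \<in> (adj (insert {a, b} (E - {{a, b}})))\<^sup>*"
    using assms(1,2) opt_tree unfolding is_tree_def connected_graph_def by (simp add: insert_absorb)
  then have "(a, c) \<in> (adj (E - {{a, b}}))\<^sup>* \<or> (b, c) \<in> (adj (E - {{a, b}}))\<^sup>*"
    using reach_insert_edge[of a c a b] by blast
  then show ?thesis
    using nonadjacent_bound_a_side[OF assms(1,3,4,2,5)] nonadjacent_bound_b_side[OF assms(1,4,2,5)]
    by blast
qed

end

theorem mainTheorem3:
  fixes \<gamma> :: real and V T :: "'a set" and d :: "'a \<Rightarrow> 'a \<Rightarrow> real"
    and S SH :: "'a set" and E EH :: "'a set set" and a b c :: 'a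
  assumes "\<gamma> > 1"
    and "steiner_instance V T d"
    and "gamma_stable \<gamma> V T d"
    and "min_steiner V T (w d) (S, E)"
    and "SH \<subseteq> S" and "EH \<subseteq> E" and "EH \<subseteq> edges_of SH" and "EH \<noteq> {}"
    and "{a, b} \<in> EH"
    and "c \<in> S - SH"
    and "d b c < \<gamma> * (\<gamma> - 1) * d a b"
  shows "d b c < d a b / (\<gamma> - 1) \<and> d a b < d b c / (\<gamma> - 1)"
proof -
  interpret stable_steiner \<gamma> V T d S E
    using assms(1-4) by unfold_locales simp_all
  have ab: "{a, b} \<in> E" using assms(6,9) by blast
  have "{a, b} \<in> edges_of SH" using assms(7,9) by blast
  then have "c \<noteq> a" "c \<noteq> b" using edges_ofD[of a b SH] assms(10) by auto
  have bc: "{b, c} \<in> E"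
    using nonadjacent_bound[OF ab _ \<open>c \<noteq> a\<close> \<open>c \<noteq> b\<close>] assms(10,11) by force
  have "a \<in> V" "b \<in> V" "c \<in> V" using opt_edgeD ab bc S_subset_V by blast+
  then have "(\<gamma> - 1) * d a b < d b c" "(\<gamma> - 1) * d b c < d a b"
    using adjacent_edges_ratio[OF ab bc] adjacent_edges_ratio[of c b a] \<open>c \<noteq> a\<close> ab bc d_sym
    by (simp_all add: insert_commute)
  then show ?thesis using assms(1) by (simp add: pos_less_divide_eq mult.commute)
qed

end
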